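(* A map $F = (f,p,x)$ in $\mathfrak{G}\left[ (\mathbb{X}, \dagger) \right]_X$ is deterministic if and only if $p=0$.
   Context: Let $(\mathbb{X}, \dagger)$ be a dagger additive category (a dagger category enriched in abelian groups with additive dagger and finite biproducts satisfying $\pi_j^\dagger = \iota_j$), and fix an object $X$. A map $p: B \to B$ is $\dagger$-positive if $p = \phi^\dagger \circ \phi$ for some $\phi$. The Markov category $\mathfrak{G}\left[ (\mathbb{X}, \dagger) \right]_X$ has the objects of $\mathbb{X}$ and maps $A \to B$ the triples $(f,p,x)$ with $f: A \to B$, $p: B \to B$ $\dagger$-positive, $x: X \to B$; identities $(\mathsf{id}_A,0,0)$; composition $(g,q,y) \circ (f,p,x) = (g \circ f, q + g \circ p \circ g^\dagger, y + g \circ x)$; monoidal product $A \otimes B = A \oplus B$, $(f,p,x) \otimes (g,q,y) = \left(f \oplus g, p \oplus q, \begin{bmatrix} x \\ y \end{bmatrix}\right)$; copy $\mathsf{copy}_A = \left(\begin{bmatrix} \mathsf{id}_A \\ \mathsf{id}_A \end{bmatrix}, 0, 0\right)$ and delete $(0,0,0): A \to \mathsf{0}$. A map $F: A \to B$ in a Markov category is deterministic if $\mathsf{copy}_B \circ F = (F \otimes F) \circ \mathsf{copy}_A$. *)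

theory Defs
  imports Main
begin

text \<open>A category given by explicit data: objects, arrows, domain/codomain, identities,
  composition (comp g f = g after f), dagger, additive structure on each hom-set
  (zero, addition, negation), binary biproducts with projections/injections, and a
  zero object (the empty biproduct).\<close>

record ('o, 'm) dac =
  c_obj  :: "'o set"
  c_arr  :: "'m set"
  c_dom  :: "'m \<Rightarrow> 'o"
  c_cod  :: "'m \<Rightarrow> 'o"
  c_id   :: "'o \<Rightarrow> 'm"
  c_comp :: "'m \<Rightarrow> 'm \<Rightarrow> 'm"
  c_dag  :: "'m \<Rightarrow> 'm"
  c_zero :: "'o \<Rightarrow> 'o \<Rightarrow> 'm"
  c_add  :: "'m \<Rightarrow> 'm \<Rightarrow> 'm"
  c_neg  :: "'m \<Rightarrow> 'm"
  c_bip  :: "'o \<Rightarrow> 'o \<Rightarrow> 'o"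
  c_pr1  :: "'o \<Rightarrow> 'o \<Rightarrow> 'm"
  c_pr2  :: "'o \<Rightarrow> 'o \<Rightarrow> 'm"
  c_in1  :: "'o \<Rightarrow> 'o \<Rightarrow> 'm"
  c_in2  :: "'o \<Rightarrow> 'o \<Rightarrow> 'm"
  c_zobj :: "'o"

definition hom :: "('o, 'm) dac \<Rightarrow> 'o \<Rightarrow> 'o \<Rightarrow> 'm set" where
  "hom C A B = {f \<in> c_arr C. c_dom C f = A \<and> c_cod C f = B}"

definition is_category :: "('o, 'm) dac \<Rightarrow> bool" where
  "is_category C \<longleftrightarrow>
     (\<forall>f\<in>c_arr C. c_dom C f \<in> c_obj C \<and> c_cod C f \<in> c_obj C)
   \<and> (\<forall>A\<in>c_obj C. c_id C A \<in> hom C A A)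
   \<and> (\<forall>f\<in>c_arr C. \<forall>g\<in>c_arr C. c_cod C f = c_dom C g \<longrightarrow>
        c_comp C g f \<in> hom C (c_dom C f) (c_cod C g))
   \<and> (\<forall>f\<in>c_arr C. c_comp C f (c_id C (c_dom C f)) = f \<and> c_comp C (c_id C (c_cod C f)) f = f)
   \<and> (\<forall>f\<in>c_arr C. \<forall>g\<in>c_arr C. \<forall>h\<in>c_arr C. c_cod C f = c_dom C g \<and> c_cod C g = c_dom C h \<longrightarrow>
        c_comp C h (c_comp C g f) = c_comp C (c_comp C h g) f)"

definition is_ab_enriched :: "('o, 'm) dac \<Rightarrow> bool" where
  "is_ab_enriched C \<longleftrightarrow>
     (\<forall>A\<in>c_obj C. \<forall>B\<in>c_obj C.
        c_zero C A B \<in> hom C A B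
      \<and> (\<forall>f\<in>hom C A B. \<forall>g\<in>hom C A B. c_add C f g \<in> hom C A B)
      \<and> (\<forall>f\<in>hom C A B. c_neg C f \<in> hom C A B)
      \<and> (\<forall>f\<in>hom C A B. \<forall>g\<in>hom C A B. \<forall>h\<in>hom C A B.
            c_add C (c_add C f g) h = c_add C f (c_add C g h))
      \<and> (\<forall>f\<in>hom C A B. \<forall>g\<in>hom C A B. c_add C f g = c_add C g f)
      \<and> (\<forall>f\<in>hom C A B. c_add C (c_zero C A B) f = f)
      \<and> (\<forall>f\<in>hom C A B. c_add C (c_neg C f) f = c_zero C A B))
   \<and> (\<forall>A\<in>c_obj C. \<forall>B\<in>c_obj C. \<forall>D\<in>c_obj C.
        (\<forall>f\<in>hom C A B. \<forall>g\<in>hom C A B. \<forall>h\<in>hom C B D.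
            c_comp C h (c_add C f g) = c_add C (c_comp C h f) (c_comp C h g))
      \<and> (\<forall>h\<in>hom C A B. \<forall>f\<in>hom C B D. \<forall>g\<in>hom C B D.
            c_comp C (c_add C f g) h = c_add C (c_comp C f h) (c_comp C g h)))"

definition is_additive_dagger :: "('o, 'm) dac \<Rightarrow> bool" where
  "is_additive_dagger C \<longleftrightarrow>
     (\<forall>f\<in>c_arr C. c_dag C f \<in> hom C (c_cod C f) (c_dom C f))
   \<and> (\<forall>f\<in>c_arr C. c_dag C (c_dag C f) = f)
   \<and> (\<forall>A\<in>c_obj C. c_dag C (c_id C A) = c_id C A)
   \<and> (\<forall>f\<in>c_arr C. \<forall>g\<in>c_arr C. c_cod C f = c_dom C g \<longrightarrow>
        c_dag C (c_comp C g f) = c_comp C (c_dag C f) (c_dag C g))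
   \<and> (\<forall>A\<in>c_obj C. \<forall>B\<in>c_obj C. \<forall>f\<in>hom C A B. \<forall>g\<in>hom C A B.
        c_dag C (c_add C f g) = c_add C (c_dag C f) (c_dag C g))"

definition has_dagger_biproducts :: "('o, 'm) dac \<Rightarrow> bool" where
  "has_dagger_biproducts C \<longleftrightarrow>
     c_zobj C \<in> c_obj C
   \<and> c_id C (c_zobj C) = c_zero C (c_zobj C) (c_zobj C)
   \<and> (\<forall>A\<in>c_obj C. \<forall>B\<in>c_obj C.
        c_bip C A B \<in> c_obj C
      \<and> c_pr1 C A B \<in> hom C (c_bip C A B) A
      \<and> c_pr2 C A B \<in> hom C (c_bip C A B) B
      \<and> c_in1 C A B \<in> hom C A (c_bip C A B)
      \<and> c_in2 C A B \<in> hom C B (c_bip C A B)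
      \<and> c_comp C (c_pr1 C A B) (c_in1 C A B) = c_id C A
      \<and> c_comp C (c_pr2 C A B) (c_in2 C A B) = c_id C B
      \<and> c_comp C (c_pr1 C A B) (c_in2 C A B) = c_zero C B A
      \<and> c_comp C (c_pr2 C A B) (c_in1 C A B) = c_zero C A B
      \<and> c_add C (c_comp C (c_in1 C A B) (c_pr1 C A B)) (c_comp C (c_in2 C A B) (c_pr2 C A B))
          = c_id C (c_bip C A B)
      \<and> c_dag C (c_pr1 C A B) = c_in1 C A B
      \<and> c_dag C (c_pr2 C A B) = c_in2 C A B)"

definition dagger_additive_category :: "('o, 'm) dac \<Rightarrow> bool" where
  "dagger_additive_category C \<longleftrightarrow>
     is_category C \<and> is_ab_enriched C \<and> is_additive_dagger C \<and> has_dagger_biproducts C"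

definition dagger_positive :: "('o, 'm) dac \<Rightarrow> 'o \<Rightarrow> 'm \<Rightarrow> bool" where
  "dagger_positive C B p \<longleftrightarrow> (\<exists>\<phi>\<in>c_arr C. c_dom C \<phi> = B \<and> p = c_comp C (c_dag C \<phi>) \<phi>)"

definition tuple :: "('o, 'm) dac \<Rightarrow> 'm \<Rightarrow> 'm \<Rightarrow> 'm" where
  "tuple C a b = c_add C (c_comp C (c_in1 C (c_cod C a) (c_cod C b)) a)
                         (c_comp C (c_in2 C (c_cod C a) (c_cod C b)) b)"

definition dsum :: "('o, 'm) dac \<Rightarrow> 'm \<Rightarrow> 'm \<Rightarrow> 'm" where
  "dsum C f g = c_add C
     (c_comp C (c_in1 C (c_cod C f) (c_cod C g)) (c_comp C f (c_pr1 C (c_dom C f) (c_dom C g))))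
     (c_comp C (c_in2 C (c_cod C f) (c_cod C g)) (c_comp C g (c_pr2 C (c_dom C f) (c_dom C g))))"

text \<open>The Markov category G[(X,dagger)]_X: maps A -> B are triples (f,p,x).\<close>
definition gmap :: "('o, 'm) dac \<Rightarrow> 'o \<Rightarrow> 'o \<Rightarrow> 'o \<Rightarrow> 'm \<times> 'm \<times> 'm \<Rightarrow> bool" where
  "gmap C X A B F = (case F of (f, p, x) \<Rightarrow>
     f \<in> hom C A B \<and> p \<in> hom C B B \<and> dagger_positive C B p \<and> x \<in> hom C X B)"

definition gcomp :: "('o, 'm) dac \<Rightarrow> 'm \<times> 'm \<times> 'm \<Rightarrow> 'm \<times> 'm \<times> 'm \<Rightarrow> 'm \<times> 'm \<times> 'm" where
  "gcomp C G F = (case G of (g, q, y) \<Rightarrow> case F of (f, p, x) \<Rightarrow>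
     (c_comp C g f, c_add C q (c_comp C g (c_comp C p (c_dag C g))), c_add C y (c_comp C g x)))"

definition gtensor :: "('o, 'm) dac \<Rightarrow> 'm \<times> 'm \<times> 'm \<Rightarrow> 'm \<times> 'm \<times> 'm \<Rightarrow> 'm \<times> 'm \<times> 'm" where
  "gtensor C F G = (case F of (f, p, x) \<Rightarrow> case G of (g, q, y) \<Rightarrow>
     (dsum C f g, dsum C p q, tuple C x y))"

definition gcopy :: "('o, 'm) dac \<Rightarrow> 'o \<Rightarrow> 'o \<Rightarrow> 'm \<times> 'm \<times> 'm" where
  "gcopy C X A = (tuple C (c_id C A) (c_id C A),
                  c_zero C (c_bip C A A) (c_bip C A A), c_zero C X (c_bip C A A))"

definition gdeterministic :: "('o, 'm) dac \<Rightarrow> 'o \<Rightarrow> 'o \<Rightarrow> 'o \<Rightarrow> 'm \<times> 'm \<times> 'm \<Rightarrow> bool" where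
  "gdeterministic C X A B F \<longleftrightarrow>
     gcomp C (gcopy C X B) F = gcomp C (gtensor C F F) (gcopy C X A)"

end

theory Submission
  imports Defs
begin

(* Composing with the copy maps on either side gives triples that always agree in the
   first and third components, because the diagonal is natural. Hence F = (f, p, x) is
   deterministic iff \<Delta> p \<Delta>\<^sup>\<dagger> = dsum p p for the diagonal \<Delta> of B. Cutting both sides down to
   the corner \<pi>\<^sub>1 (-) \<iota>\<^sub>2 gives p on the left, since \<Delta>\<^sup>\<dagger> \<iota>\<^sub>2 = (\<pi>\<^sub>2 \<Delta>)\<^sup>\<dagger> = id, and 0 on the
   right; conversely both sides vanish when p = 0. *)

locale dagger_additive =
  fixes C :: "('o, 'm) dac"
  assumes dagger_additive_category: "dagger_additive_category C"
begin

abbreviation arr_comp (infixr "\<cdot>" 70) where "g \<cdot> f \<equiv> c_comp C g f"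
abbreviation arr_add (infixl "\<oplus>" 65) where "f \<oplus> g \<equiv> c_add C f g"
abbreviation dag ("_\<^sup>\<dagger>" [1000] 999) where "f\<^sup>\<dagger> \<equiv> c_dag C f"
abbreviation Z where "Z \<equiv> c_zero C"
abbreviation H where "H \<equiv> hom C"
abbreviation bip where "bip \<equiv> c_bip C"
abbreviation pr1 where "pr1 \<equiv> c_pr1 C"
abbreviation pr2 where "pr2 \<equiv> c_pr2 C"
abbreviation in1 where "in1 \<equiv> c_in1 C"
abbreviation in2 where "in2 \<equiv> c_in2 C"
abbreviation diag where "diag A \<equiv> tuple C (c_id C A) (c_id C A)"

lemma category: "is_category C" and ab_enriched: "is_ab_enriched C"
  and additive_dagger: "is_additive_dagger C" and biproducts: "has_dagger_biproducts C"
  using dagger_additive_category unfolding dagger_additive_category_def by auto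

lemma hom_objs: "f \<in> H A B \<Longrightarrow> A \<in> c_obj C \<and> B \<in> c_obj C"
  using category unfolding is_category_def hom_def by auto

lemma dom_cod_hom: "f \<in> H A B \<Longrightarrow> c_dom C f = A \<and> c_cod C f = B"
  unfolding hom_def by auto

lemma comp_hom [intro]: "f \<in> H A B \<Longrightarrow> g \<in> H B D \<Longrightarrow> g \<cdot> f \<in> H A D"
  using category unfolding is_category_def hom_def by auto

lemma comp_assoc: "f \<in> H A B \<Longrightarrow> g \<in> H B D \<Longrightarrow> h \<in> H D E \<Longrightarrow> h \<cdot> (g \<cdot> f) = (h \<cdot> g) \<cdot> f"
  using category unfolding is_category_def hom_def by auto

lemma id_hom [intro]: "A \<in> c_obj C \<Longrightarrow> c_id C A \<in> H A A"
  using category unfolding is_category_def by auto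

lemma comp_id: "f \<in> H A B \<Longrightarrow> f \<cdot> c_id C A = f"
  using category unfolding is_category_def hom_def by auto

lemma id_comp: "f \<in> H A B \<Longrightarrow> c_id C B \<cdot> f = f"
  using category unfolding is_category_def hom_def by auto

lemma zero_hom [intro]: "A \<in> c_obj C \<Longrightarrow> B \<in> c_obj C \<Longrightarrow> Z A B \<in> H A B"
  using ab_enriched unfolding is_ab_enriched_def by blast

lemma add_hom [intro]: "f \<in> H A B \<Longrightarrow> g \<in> H A B \<Longrightarrow> f \<oplus> g \<in> H A B"
  using ab_enriched hom_objs unfolding is_ab_enriched_def by meson

lemma neg_hom: "f \<in> H A B \<Longrightarrow> c_neg C f \<in> H A B"
  using ab_enriched hom_objs unfolding is_ab_enriched_def by meson

lemma add_assoc: "f \<in> H A B \<Longrightarrow> g \<in> H A B \<Longrightarrow> h \<in> H A B \<Longrightarrow> (f \<oplus> g) \<oplus> h = f \<oplus> (g \<oplus> h)"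
  using ab_enriched hom_objs unfolding is_ab_enriched_def by meson

lemma add_commute: "f \<in> H A B \<Longrightarrow> g \<in> H A B \<Longrightarrow> f \<oplus> g = g \<oplus> f"
  using ab_enriched hom_objs unfolding is_ab_enriched_def by meson

lemma zero_add: "f \<in> H A B \<Longrightarrow> Z A B \<oplus> f = f"
  using ab_enriched hom_objs unfolding is_ab_enriched_def by meson

lemma add_zero: "f \<in> H A B \<Longrightarrow> f \<oplus> Z A B = f"
  using zero_add add_commute hom_objs zero_hom by metis

lemma neg_add: "f \<in> H A B \<Longrightarrow> c_neg C f \<oplus> f = Z A B"
  using ab_enriched hom_objs unfolding is_ab_enriched_def by meson

lemma comp_add: "f \<in> H A B \<Longrightarrow> g \<in> H A B \<Longrightarrow> h \<in> H B D \<Longrightarrow> h \<cdot> (f \<oplus> g) = h \<cdot> f \<oplus> h \<cdot> g"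
  using ab_enriched hom_objs unfolding is_ab_enriched_def by meson

lemma add_comp: "h \<in> H A B \<Longrightarrow> f \<in> H B D \<Longrightarrow> g \<in> H B D \<Longrightarrow> (f \<oplus> g) \<cdot> h = f \<cdot> h \<oplus> g \<cdot> h"
  using ab_enriched hom_objs unfolding is_ab_enriched_def by meson

lemma add_self_eq_zero: assumes "u \<in> H A B" "u \<oplus> u = u" shows "u = Z A B"
proof -
  have "Z A B = c_neg C u \<oplus> (u \<oplus> u)" using neg_add assms by simp
  also have "\<dots> = (c_neg C u \<oplus> u) \<oplus> u" using add_assoc neg_hom assms(1) by metis
  also have "\<dots> = u" using neg_add zero_add assms(1) by simp
  finally show ?thesis by simp
qed

lemma comp_zero: assumes h: "h \<in> H B D" and A: "A \<in> c_obj C" shows "h \<cdot> Z A B = Z A D"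
proof -
  have z: "Z A B \<in> H A B" using zero_hom A hom_objs[OF h] by blast
  have "h \<cdot> Z A B \<oplus> h \<cdot> Z A B = h \<cdot> (Z A B \<oplus> Z A B)" using comp_add[OF z z h] by simp
  also have "\<dots> = h \<cdot> Z A B" using zero_add[OF z] by simp
  finally show ?thesis using add_self_eq_zero[OF comp_hom[OF z h]] by simp
qed

lemma zero_comp: assumes h: "h \<in> H A B" and D: "D \<in> c_obj C" shows "Z B D \<cdot> h = Z A D"
proof -
  have z: "Z B D \<in> H B D" using zero_hom D hom_objs[OF h] by blast
  have "Z B D \<cdot> h \<oplus> Z B D \<cdot> h = (Z B D \<oplus> Z B D) \<cdot> h" using add_comp[OF h z z] by simp
  also have "\<dots> = Z B D \<cdot> h" using zero_add[OF z] by simp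
  finally show ?thesis using add_self_eq_zero[OF comp_hom[OF h z]] by simp
qed

lemma dag_hom [intro]: "f \<in> H A B \<Longrightarrow> f\<^sup>\<dagger> \<in> H B A"
  using additive_dagger unfolding is_additive_dagger_def hom_def by auto

lemma dag_id: "A \<in> c_obj C \<Longrightarrow> (c_id C A)\<^sup>\<dagger> = c_id C A"
  using additive_dagger unfolding is_additive_dagger_def by auto

lemma dag_comp: "f \<in> H A B \<Longrightarrow> g \<in> H B D \<Longrightarrow> (g \<cdot> f)\<^sup>\<dagger> = f\<^sup>\<dagger> \<cdot> g\<^sup>\<dagger>"
  using additive_dagger unfolding is_additive_dagger_def hom_def by auto

lemma
  assumes "A \<in> c_obj C" "B \<in> c_obj C"
  shows bip_obj: "bip A B \<in> c_obj C"
    and pr1_hom: "pr1 A B \<in> H (bip A B) A"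
    and pr2_hom: "pr2 A B \<in> H (bip A B) B"
    and in1_hom: "in1 A B \<in> H A (bip A B)"
    and in2_hom: "in2 A B \<in> H B (bip A B)"
    and pr1_in1: "pr1 A B \<cdot> in1 A B = c_id C A"
    and pr2_in2: "pr2 A B \<cdot> in2 A B = c_id C B"
    and pr1_in2: "pr1 A B \<cdot> in2 A B = Z B A"
    and pr2_in1: "pr2 A B \<cdot> in1 A B = Z A B"
    and in_pr_sum: "in1 A B \<cdot> pr1 A B \<oplus> in2 A B \<cdot> pr2 A B = c_id C (bip A B)"
    and dag_pr2: "(pr2 A B)\<^sup>\<dagger> = in2 A B"
  using biproducts assms unfolding has_dagger_biproducts_def by auto

lemma bip_expand:
  assumes u: "u \<in> H X (bip A B)" and objs: "A \<in> c_obj C" "B \<in> c_obj C"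
  shows "u = in1 A B \<cdot> (pr1 A B \<cdot> u) \<oplus> in2 A B \<cdot> (pr2 A B \<cdot> u)"
proof -
  note p1 = pr1_hom[OF objs] and p2 = pr2_hom[OF objs]
    and i1 = in1_hom[OF objs] and i2 = in2_hom[OF objs]
  have "u = (in1 A B \<cdot> pr1 A B \<oplus> in2 A B \<cdot> pr2 A B) \<cdot> u"
    using id_comp[OF u] in_pr_sum[OF objs] by simp
  also have "\<dots> = (in1 A B \<cdot> pr1 A B) \<cdot> u \<oplus> (in2 A B \<cdot> pr2 A B) \<cdot> u"
    using add_comp[OF u comp_hom[OF p1 i1] comp_hom[OF p2 i2]] .
  finally show ?thesis using comp_assoc[OF u p1 i1] comp_assoc[OF u p2 i2] by simp
qed

lemma bip_eqI:
  assumes "u \<in> H X (bip A B)" "v \<in> H X (bip A B)" "A \<in> c_obj C" "B \<in> c_obj C"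
    and "pr1 A B \<cdot> u = pr1 A B \<cdot> v" "pr2 A B \<cdot> u = pr2 A B \<cdot> v"
  shows "u = v"
proof -
  have "u = in1 A B \<cdot> (pr1 A B \<cdot> v) \<oplus> in2 A B \<cdot> (pr2 A B \<cdot> v)"
    using bip_expand[OF assms(1,3,4)] assms(5,6) by metis
  then show ?thesis using bip_expand[OF assms(2,3,4)] by metis
qed

lemma tuple_eq:
  "a \<in> H X A \<Longrightarrow> b \<in> H X B \<Longrightarrow> tuple C a b = in1 A B \<cdot> a \<oplus> in2 A B \<cdot> b"
  unfolding tuple_def using dom_cod_hom by metis

lemma
  assumes a: "a \<in> H X A" and b: "b \<in> H X B"
  shows tuple_hom: "tuple C a b \<in> H X (bip A B)"
    and pr1_tuple: "pr1 A B \<cdot> tuple C a b = a"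
    and pr2_tuple: "pr2 A B \<cdot> tuple C a b = b"
proof -
  have objs: "A \<in> c_obj C" "B \<in> c_obj C" using hom_objs a b by auto
  note p1 = pr1_hom[OF objs] and p2 = pr2_hom[OF objs]
    and i1a = comp_hom[OF a in1_hom[OF objs]] and i2b = comp_hom[OF b in2_hom[OF objs]]
  show "tuple C a b \<in> H X (bip A B)" unfolding tuple_eq[OF a b] using i1a i2b ..
  have "pr1 A B \<cdot> tuple C a b = (pr1 A B \<cdot> in1 A B) \<cdot> a \<oplus> (pr1 A B \<cdot> in2 A B) \<cdot> b"
    unfolding tuple_eq[OF a b] comp_add[OF i1a i2b p1]
    using comp_assoc[OF a in1_hom[OF objs] p1] comp_assoc[OF b in2_hom[OF objs] p1] by simp
  also have "\<dots> = a"
    using pr1_in1[OF objs] pr1_in2[OF objs] id_comp[OF a] zero_comp[OF b objs(1)] add_zero[OF a]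
    by simp
  finally show "pr1 A B \<cdot> tuple C a b = a" .
  have "pr2 A B \<cdot> tuple C a b = (pr2 A B \<cdot> in1 A B) \<cdot> a \<oplus> (pr2 A B \<cdot> in2 A B) \<cdot> b"
    unfolding tuple_eq[OF a b] comp_add[OF i1a i2b p2]
    using comp_assoc[OF a in1_hom[OF objs] p2] comp_assoc[OF b in2_hom[OF objs] p2] by simp
  also have "\<dots> = b"
    using pr2_in1[OF objs] pr2_in2[OF objs] id_comp[OF b] zero_comp[OF a objs(2)] zero_add[OF b]
    by simp
  finally show "pr2 A B \<cdot> tuple C a b = b" .
qed

lemma dag_tuple_comp_in2:
  assumes a: "a \<in> H X A" and b: "b \<in> H X B"
  shows "(tuple C a b)\<^sup>\<dagger> \<cdot> in2 A B = b\<^sup>\<dagger>"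
proof -
  have objs: "A \<in> c_obj C" "B \<in> c_obj C" using hom_objs a b by auto
  have "(tuple C a b)\<^sup>\<dagger> \<cdot> in2 A B = (pr2 A B \<cdot> tuple C a b)\<^sup>\<dagger>"
    using dag_comp[OF tuple_hom[OF a b] pr2_hom[OF objs]] dag_pr2[OF objs] by simp
  then show ?thesis using pr2_tuple[OF a b] by simp
qed

lemma tuple_comp:
  assumes a: "a \<in> H X A" and b: "b \<in> H X B" and h: "h \<in> H Y X"
  shows "tuple C a b \<cdot> h = tuple C (a \<cdot> h) (b \<cdot> h)"
proof (rule bip_eqI)
  have objs: "A \<in> c_obj C" "B \<in> c_obj C" using hom_objs a b by auto
  then show "A \<in> c_obj C" "B \<in> c_obj C" .
  show "tuple C a b \<cdot> h \<in> H Y (bip A B)" using h tuple_hom[OF a b] ..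
  show "tuple C (a \<cdot> h) (b \<cdot> h) \<in> H Y (bip A B)"
    using tuple_hom comp_hom h a b by blast
  show "pr1 A B \<cdot> (tuple C a b \<cdot> h) = pr1 A B \<cdot> tuple C (a \<cdot> h) (b \<cdot> h)"
    using comp_assoc[OF h tuple_hom[OF a b] pr1_hom[OF objs]] pr1_tuple[OF a b]
      pr1_tuple[OF comp_hom[OF h a] comp_hom[OF h b]] by simp
  show "pr2 A B \<cdot> (tuple C a b \<cdot> h) = pr2 A B \<cdot> tuple C (a \<cdot> h) (b \<cdot> h)"
    using comp_assoc[OF h tuple_hom[OF a b] pr2_hom[OF objs]] pr2_tuple[OF a b]
      pr2_tuple[OF comp_hom[OF h a] comp_hom[OF h b]] by simp
qed

lemma dsum_eq_tuple:
  assumes f: "f \<in> H A B" and g: "g \<in> H A' B'"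
  shows "dsum C f g = tuple C (f \<cdot> pr1 A A') (g \<cdot> pr2 A A')"
proof -
  have objs: "A \<in> c_obj C" "A' \<in> c_obj C" using hom_objs f g by auto
  have "f \<cdot> pr1 A A' \<in> H (bip A A') B" "g \<cdot> pr2 A A' \<in> H (bip A A') B'"
    using comp_hom pr1_hom[OF objs] pr2_hom[OF objs] f g by blast+
  then show ?thesis
    unfolding dsum_def tuple_def using dom_cod_hom f g by metis
qed

lemma
  assumes f: "f \<in> H A B" and g: "g \<in> H A' B'"
  shows dsum_hom: "dsum C f g \<in> H (bip A A') (bip B B')"
    and pr1_dsum: "pr1 B B' \<cdot> dsum C f g = f \<cdot> pr1 A A'"
    and pr2_dsum: "pr2 B B' \<cdot> dsum C f g = g \<cdot> pr2 A A'"
proof -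
  have objs: "A \<in> c_obj C" "A' \<in> c_obj C" using hom_objs f g by auto
  have "f \<cdot> pr1 A A' \<in> H (bip A A') B" "g \<cdot> pr2 A A' \<in> H (bip A A') B'"
    using comp_hom pr1_hom[OF objs] pr2_hom[OF objs] f g by blast+
  then show "dsum C f g \<in> H (bip A A') (bip B B')"
    "pr1 B B' \<cdot> dsum C f g = f \<cdot> pr1 A A'" "pr2 B B' \<cdot> dsum C f g = g \<cdot> pr2 A A'"
    unfolding dsum_eq_tuple[OF f g] using tuple_hom pr1_tuple pr2_tuple by auto
qed

lemma dsum_comp_tuple:
  assumes f: "f \<in> H A B" and g: "g \<in> H A' B'" and a: "a \<in> H X A" and b: "b \<in> H X A'"
  shows "dsum C f g \<cdot> tuple C a b = tuple C (f \<cdot> a) (g \<cdot> b)"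
proof -
  have objs: "A \<in> c_obj C" "A' \<in> c_obj C" using hom_objs f g by auto
  note p1 = pr1_hom[OF objs] and p2 = pr2_hom[OF objs] and t = tuple_hom[OF a b]
  have "dsum C f g \<cdot> tuple C a b
      = tuple C ((f \<cdot> pr1 A A') \<cdot> tuple C a b) ((g \<cdot> pr2 A A') \<cdot> tuple C a b)"
    using dsum_eq_tuple[OF f g] tuple_comp[OF comp_hom[OF p1 f] comp_hom[OF p2 g] t] by simp
  also have "\<dots> = tuple C (f \<cdot> a) (g \<cdot> b)"
    using comp_assoc[OF t p1 f] comp_assoc[OF t p2 g] pr1_tuple[OF a b] pr2_tuple[OF a b]
    by simp
  finally show ?thesis .
qed

lemma dsum_zero:
  assumes objs: "A \<in> c_obj C" "B \<in> c_obj C" "A' \<in> c_obj C" "B' \<in> c_obj C"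
  shows "dsum C (Z A B) (Z A' B') = Z (bip A A') (bip B B')"
proof (rule bip_eqI)
  note z = zero_hom[OF objs(1,2)] zero_hom[OF objs(3,4)]
  show "dsum C (Z A B) (Z A' B') \<in> H (bip A A') (bip B B')" using dsum_hom[OF z] .
  show "Z (bip A A') (bip B B') \<in> H (bip A A') (bip B B')"
    using zero_hom bip_obj objs by blast
  show "pr1 B B' \<cdot> dsum C (Z A B) (Z A' B') = pr1 B B' \<cdot> Z (bip A A') (bip B B')"
    using pr1_dsum[OF z] zero_comp[OF pr1_hom[OF objs(1,3)] objs(2)]
      comp_zero[OF pr1_hom[OF objs(2,4)] bip_obj[OF objs(1,3)]] by simp
  show "pr2 B B' \<cdot> dsum C (Z A B) (Z A' B') = pr2 B B' \<cdot> Z (bip A A') (bip B B')"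
    using pr2_dsum[OF z] zero_comp[OF pr2_hom[OF objs(1,3)] objs(4)]
      comp_zero[OF pr2_hom[OF objs(2,4)] bip_obj[OF objs(1,3)]] by simp
qed (use objs in auto)

lemma pr1_dsum_in2:
  assumes f: "f \<in> H A B" and g: "g \<in> H A' B'"
  shows "(pr1 B B' \<cdot> dsum C f g) \<cdot> in2 A A' = Z A' B"
proof -
  have objs: "A \<in> c_obj C" "A' \<in> c_obj C" using hom_objs f g by auto
  have "(pr1 B B' \<cdot> dsum C f g) \<cdot> in2 A A' = f \<cdot> (pr1 A A' \<cdot> in2 A A')"
    using pr1_dsum[OF f g] comp_assoc[OF in2_hom[OF objs] pr1_hom[OF objs] f] by simp
  then show ?thesis using pr1_in2[OF objs] comp_zero[OF f objs(2)] by simp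
qed

lemma diag_comp: "f \<in> H A B \<Longrightarrow> diag B \<cdot> f = tuple C f f"
  using tuple_comp id_comp id_hom hom_objs by metis

lemma dsum_comp_diag: "f \<in> H A B \<Longrightarrow> dsum C f f \<cdot> diag A = tuple C f f"
  using dsum_comp_tuple comp_id id_hom hom_objs by metis

lemma diag_conj_eq_dsum_iff:
  assumes p: "p \<in> H A B"
  shows "diag B \<cdot> (p \<cdot> (diag A)\<^sup>\<dagger>) = dsum C p p \<longleftrightarrow> p = Z A B"
proof -
  have objs: "A \<in> c_obj C" "B \<in> c_obj C" using hom_objs p by auto
  note iA = id_hom[OF objs(1)] and iB = id_hom[OF objs(2)]
  note dA = tuple_hom[OF iA iA] and dB = tuple_hom[OF iB iB]
  have pdA: "p \<cdot> (diag A)\<^sup>\<dagger> \<in> H (bip A A) B" using dag_hom[OF dA] p ..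
  show ?thesis
  proof
    assume eq: "diag B \<cdot> (p \<cdot> (diag A)\<^sup>\<dagger>) = dsum C p p"
    have "pr1 B B \<cdot> (diag B \<cdot> (p \<cdot> (diag A)\<^sup>\<dagger>)) = p \<cdot> (diag A)\<^sup>\<dagger>"
      using comp_assoc[OF pdA dB pr1_hom[OF objs(2,2)]] pr1_tuple[OF iB iB] id_comp[OF pdA]
      by simp
    then have "(pr1 B B \<cdot> (diag B \<cdot> (p \<cdot> (diag A)\<^sup>\<dagger>))) \<cdot> in2 A A = p"
      using comp_assoc[OF in2_hom[OF objs(1,1)] dag_hom[OF dA] p] dag_tuple_comp_in2[OF iA iA]
        dag_id[OF objs(1)] comp_id[OF p] by simp
    then show "p = Z A B" using eq pr1_dsum_in2[OF p p] by simp
  next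
    assume "p = Z A B"
    then show "diag B \<cdot> (p \<cdot> (diag A)\<^sup>\<dagger>) = dsum C p p"
      using zero_comp[OF dag_hom[OF dA] objs(2)] comp_zero[OF dB bip_obj[OF objs(1,1)]]
        dsum_zero[OF objs objs] by simp
  qed
qed

lemma gdeterministic_iff_diag_conj_eq_dsum:
  assumes F: "gmap C X A B (f, p, x)"
  shows "gdeterministic C X A B (f, p, x) \<longleftrightarrow> diag B \<cdot> (p \<cdot> (diag B)\<^sup>\<dagger>) = dsum C p p"
proof -
  from F have f: "f \<in> H A B" and p: "p \<in> H B B" and x: "x \<in> H X B"
    unfolding gmap_def by auto
  have objs: "X \<in> c_obj C" "A \<in> c_obj C" "B \<in> c_obj C" using hom_objs f x by auto
  note iB = id_hom[OF objs(3)]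
  note ff = dsum_hom[OF f f] and dBB = tuple_hom[OF iB iB]
  have conj_hom: "diag B \<cdot> (p \<cdot> (diag B)\<^sup>\<dagger>) \<in> H (bip B B) (bip B B)"
    using dag_hom[OF dBB] p dBB by blast
  have "Z (bip A A) (bip A A) \<cdot> (dsum C f f)\<^sup>\<dagger> = Z (bip B B) (bip A A)"
    using zero_comp[OF dag_hom[OF ff] bip_obj[OF objs(2,2)]] .
  then have pushforward_zero_noise:
      "dsum C f f \<cdot> (Z (bip A A) (bip A A) \<cdot> (dsum C f f)\<^sup>\<dagger>) = Z (bip B B) (bip B B)"
    using comp_zero[OF ff bip_obj[OF objs(3,3)]] by simp
  have pushforward_zero_mean: "dsum C f f \<cdot> Z X (bip A A) = Z X (bip B B)"
    using comp_zero[OF ff objs(1)] .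
  show ?thesis
    unfolding gdeterministic_def gcomp_def gcopy_def gtensor_def
    using diag_comp[OF f] dsum_comp_diag[OF f] diag_comp[OF x]
      pushforward_zero_noise pushforward_zero_mean
      zero_add[OF conj_hom] add_zero[OF dsum_hom[OF p p]] zero_add[OF tuple_hom[OF x x]]
      add_zero[OF tuple_hom[OF x x]]
    by simp
qed

end

theorem mainTheorem2:
  fixes C :: "('o, 'm) dac" and X A B :: 'o and f p x :: 'm
  assumes "dagger_additive_category C"
    and "X \<in> c_obj C" and "A \<in> c_obj C" and "B \<in> c_obj C"
    and "gmap C X A B (f, p, x)"
  shows "gdeterministic C X A B (f, p, x) \<longleftrightarrow> p = c_zero C B B"
proof -
  interpret dagger_additive C by standard (rule assms(1))
  have "p \<in> hom C B B" using assms(5) unfolding gmap_def by simp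
  then show ?thesis
    using gdeterministic_iff_diag_conj_eq_dsum[OF assms(5)] diag_conj_eq_dsum_iff by simp
qed

end
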